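(* Let $G$ be a $\mathbb{P}$-generic filter over a ground model $V$, and let $(G_k)_{k\in\omega}\in\prod_{k\in\omega}\mathbb{C}_k$ be the generic sequence, i.e. the unique function $g$ on $\omega$ with $g\restriction m\in T$ for all $T\in G$ and $m\in\omega$, $G_k=g(k)$. Then in $V[G]$, $V\cap[0,1]^n\subset\bigcap_{m\in\omega}\bigcup_{k\ge m}G_k$; that is, every point of $[0,1]^n$ lying in $V$ belongs to $G_k$ for infinitely many $k$.
   Context: Fix a positive integer $n$ and real $0<r<n$. For each $k\in\omega$ fix $M_k\in\omega$ with $2^k(\sqrt{n}/M_k)^r<2^{-k}$. $C_k$ is the set of cubes $[\frac{j_0}{M_k},\frac{j_0+1}{M_k}]\times\cdots\times[\frac{j_{n-1}}{M_k},\frac{j_{n-1}+1}{M_k}]$ with $j_i\in\{0,\dots,M_k-1\}$; $\mathbb{C}_k$ is the set of unions of $2^k$ (not necessarily distinct) elements of $C_k$. Norm $\nu$ on $X\subset\mathbb{C}_k$: $\nu(X)\ge0$ always; $\nu(X)\ge1$ iff $\bigcup X=[0,1]^n$; for $j\ge1$, $\nu(X)\ge j+1$ iff for every partition $X=X_0\cup X_1$ some $\nu(X_i)\ge j$; $\nu(X)$ is the largest such $j$. Finite sequences are functions on natural numbers $m=\{0,\dots,m-1\}$, $|t|$ is the length; a tree is a set of finite sequences closed under initial segments; $\mathrm{succ}_T(t)$ is the set of immediate successors of $t$ in $T$, with $\nu(\mathrm{succ}_T(t)):=\nu(\{s(|t|):s\in\mathrm{succ}_T(t)\})$; a branching node is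 $t$ with $|\mathrm{succ}_T(t)|>1$. $\mathbb{P}$ consists of all $T$ with: (1) $T$ a nonempty tree; (2) $t(k)\in\mathbb{C}_k$ for $t\in T$, $k<|t|$; (3) $\mathrm{succ}_T(t)\neq\emptyset$ for all $t\in T$; (4) every node has a branching extension in $T$; (5) for each $K\in\omega$ only finitely many branching nodes $t$ have $\nu(\mathrm{succ}_T(t))\le K$. Ordered by inclusion. *)

theory Defs
  imports "HOL-Analysis.Analysis"
begin

definition unit_cube :: "(real ^ 'n) set" where
  "unit_cube = {x. \<forall>i. 0 \<le> x $ i \<and> x $ i \<le> 1}"

definition grid_cubes :: "nat \<Rightarrow> (real ^ 'n) set set" where
  "grid_cubes M = { {x. \<forall>i. real (j i) / real M \<le> x $ i \<and> x $ i \<le> (real (j i) + 1) / real M}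
                    | j :: 'n \<Rightarrow> nat. \<forall>i. j i < M }"

definition CC :: "(nat \<Rightarrow> nat) \<Rightarrow> nat \<Rightarrow> (real ^ 'n) set set" where
  "CC M k = { \<Union> (c ` {..<(2::nat)^k}) | c. \<forall>i<(2::nat)^k. c i \<in> grid_cubes (M k) }"

text \<open>norm_ge j X  means  nu(X) \<ge> j.\<close>
fun norm_ge :: "nat \<Rightarrow> (real ^ 'n) set set \<Rightarrow> bool" where
  "norm_ge 0 X = True"
| "norm_ge (Suc 0) X = (\<Union> X = unit_cube)"
| "norm_ge (Suc (Suc j)) X =
     (\<forall>X0 X1. X0 \<union> X1 = X \<and> X0 \<inter> X1 = {} \<longrightarrow> norm_ge (Suc j) X0 \<or> norm_ge (Suc j) X1)"

definition norm_le :: "nat \<Rightarrow> (real ^ 'n) set set \<Rightarrow> bool" where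
  "norm_le K X \<longleftrightarrow> \<not> norm_ge (Suc K) X"

definition succ_tree :: "'a list set \<Rightarrow> 'a list \<Rightarrow> 'a list set" where
  "succ_tree T t = {s \<in> T. length s = Suc (length t) \<and> take (length t) s = t}"

definition succ_vals :: "'a list set \<Rightarrow> 'a list \<Rightarrow> 'a set" where
  "succ_vals T t = (\<lambda>s. s ! length t) ` succ_tree T t"

definition branching :: "'a list set \<Rightarrow> 'a list \<Rightarrow> bool" where
  "branching T t \<longleftrightarrow> card (succ_tree T t) > 1 \<or> infinite (succ_tree T t)"

text \<open>The forcing poset P (ordered by inclusion).\<close>
definition PP :: "(nat \<Rightarrow> nat) \<Rightarrow> (real ^ 'n) set list set set" where
  "PP M = {T. T \<noteq> {}
      \<and> (\<forall>t\<in>T. \<forall>m\<le>length t. take m t \<in> T)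
      \<and> (\<forall>t\<in>T. \<forall>k<length t. t ! k \<in> CC M k)
      \<and> (\<forall>t\<in>T. succ_tree T t \<noteq> {})
      \<and> (\<forall>t\<in>T. \<exists>s\<in>T. length t \<le> length s \<and> take (length t) s = t \<and> branching T s)
      \<and> (\<forall>K. finite {t\<in>T. branching T t \<and> norm_le K (succ_vals T t)})}"

end

theory Submission
  imports Defs
begin

text \<open>
  A density argument. A condition T has only finitely many branching nodes of norm 0, i.e.
  whose successors do not cover the cube. So above any level m there is a node t whose
  successors cover the cube, and some successor s of t has x \<in> s ! length t. The
  restriction of T to the nodes comparable with s is again a condition, and every generic
  branch through it passes through s, hence meets x at level length t \<ge> m.
\<close>

definition tree_restrict :: "'a list set \<Rightarrow> 'a list \<Rightarrow> 'a list set" where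
  "tree_restrict T s = {w \<in> T. take (length w) s = w \<or> take (length s) w = s}"

lemma take_length_trans:
  assumes "take (length w) v = w" "length s \<le> length w" "take (length s) w = s"
  shows "take (length s) v = s"
  by (metis assms min.absorb1 take_take)

lemma PP_D:
  assumes "T \<in> PP M"
  shows PP_nonempty: "T \<noteq> {}"
    and PP_take_closed: "t \<in> T \<Longrightarrow> k \<le> length t \<Longrightarrow> take k t \<in> T"
    and PP_CC: "t \<in> T \<Longrightarrow> k < length t \<Longrightarrow> t ! k \<in> CC M k"
    and PP_succ_nonempty: "t \<in> T \<Longrightarrow> succ_tree T t \<noteq> {}"
    and PP_branching_extension:
      "t \<in> T \<Longrightarrow> \<exists>s\<in>T. length t \<le> length s \<and> take (length t) s = t \<and> branching T s"
    and PP_finite_low_norm: "finite {t\<in>T. branching T t \<and> norm_le K (succ_vals T t)}"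
  using assms unfolding PP_def by blast+

lemma PP_node_of_length:
  assumes "T \<in> PP M"
  shows "\<exists>u\<in>T. length u = n"
proof (induction n)
  case 0
  from PP_nonempty[OF assms] obtain t where "t \<in> T" by auto
  then have "take 0 t \<in> T" using PP_take_closed[OF assms] by blast
  then show ?case by auto
next
  case (Suc n)
  then obtain u where u: "u \<in> T" "length u = n" by auto
  then obtain v where "v \<in> succ_tree T u" using PP_succ_nonempty[OF assms] by blast
  then show ?case using u unfolding succ_tree_def by auto
qed

lemma norm_le_0_iff: "norm_le 0 X \<longleftrightarrow> \<Union> X \<noteq> unit_cube"
  by (simp add: norm_le_def)

lemma PP_covering_node_above:
  assumes "T \<in> PP M"
  shows "\<exists>t\<in>T. L \<le> length t \<and> \<Union> (succ_vals T t) = unit_cube"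
proof -
  define F where "F = {t\<in>T. branching T t \<and> norm_le 0 (succ_vals T t)}"
  have "finite (length ` F)"
    using PP_finite_low_norm[OF assms] unfolding F_def by blast
  then obtain N where N: "\<And>t. t \<in> F \<Longrightarrow> length t < N"
    by (metis finite_nat_set_iff_bounded imageI)
  obtain u where u: "u \<in> T" "length u = max L N"
    using PP_node_of_length[OF assms] by blast
  then obtain t where t: "t \<in> T" "length u \<le> length t" "branching T t"
    using PP_branching_extension[OF assms] by blast
  then have "t \<notin> F" using N u(2) by fastforce
  with t u show ?thesis unfolding F_def norm_le_0_iff by auto
qed

lemma tree_restrict_subset: "tree_restrict T s \<subseteq> T"
  by (auto simp: tree_restrict_def)

lemma tree_restrict_self: "s \<in> T \<Longrightarrow> s \<in> tree_restrict T s"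
  by (simp add: tree_restrict_def)

lemma tree_restrict_below:
  assumes "w \<in> tree_restrict T s" "length w \<le> length s"
  shows "take (length w) s = w"
  using assms by (simp add: tree_restrict_def) (metis take_all)

lemma tree_restrict_above:
  assumes "w \<in> tree_restrict T s" "length s \<le> length w"
  shows "take (length s) w = s"
  using assms by (simp add: tree_restrict_def) (metis take_all)

lemma tree_restrict_take_closed:
  assumes closed: "\<And>t k. t \<in> T \<Longrightarrow> k \<le> length t \<Longrightarrow> take k t \<in> T"
    and w: "w \<in> tree_restrict T s" and k: "k \<le> length w"
  shows "take k w \<in> tree_restrict T s"
proof -
  have "take k w \<in> T" using closed w k by (simp add: tree_restrict_def)
  moreover have "take k s = take k w \<or> take (length s) (take k w) = s"
  proof (cases "length w \<le> length s")
    case True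
    then have "take k w = take k (take (length w) s)" using tree_restrict_below[OF w] by simp
    then show ?thesis using k by (simp add: min_absorb1)
  next
    case False
    then have sw: "take (length s) w = s" using tree_restrict_above[OF w] by simp
    show ?thesis
    proof (cases "k \<le> length s")
      case True
      then have "take k s = take k w" by (metis sw min.absorb1 take_take)
      then show ?thesis ..
    next
      case False
      then show ?thesis using sw by (simp add: min_absorb1)
    qed
  qed
  ultimately show ?thesis using k by (auto simp: tree_restrict_def min_absorb2)
qed

lemma succ_tree_tree_restrict:
  assumes w: "w \<in> tree_restrict T s" and ws: "length s \<le> length w"
  shows "succ_tree (tree_restrict T s) w = succ_tree T w"
proof
  show "succ_tree (tree_restrict T s) w \<subseteq> succ_tree T w"
    using tree_restrict_subset by (auto simp: succ_tree_def)
  show "succ_tree T w \<subseteq> succ_tree (tree_restrict T s) w"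
  proof
    fix v assume v: "v \<in> succ_tree T w"
    then have "take (length s) v = s"
      using take_length_trans[OF _ ws tree_restrict_above[OF w ws]] by (simp add: succ_tree_def)
    with v show "v \<in> succ_tree (tree_restrict T s) w"
      by (simp add: succ_tree_def tree_restrict_def)
  qed
qed

lemma branching_tree_restrict:
  assumes "w \<in> tree_restrict T s" "length s \<le> length w"
  shows "branching (tree_restrict T s) w \<longleftrightarrow> branching T w"
  using succ_tree_tree_restrict[OF assms] by (simp add: branching_def)

lemma succ_vals_tree_restrict:
  assumes "w \<in> tree_restrict T s" "length s \<le> length w"
  shows "succ_vals (tree_restrict T s) w = succ_vals T w"
  using succ_tree_tree_restrict[OF assms] by (simp add: succ_vals_def)

lemma tree_restrict_extends_beyond:
  assumes "s \<in> T" "w \<in> tree_restrict T s"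
  shows "\<exists>w'\<in>tree_restrict T s. length s \<le> length w' \<and> length w \<le> length w'
           \<and> take (length w) w' = w"
proof (cases "length w \<le> length s")
  case True
  then show ?thesis
    using tree_restrict_below[OF assms(2)] tree_restrict_self[OF assms(1)] by auto
next
  case False
  then show ?thesis using assms(2) by (intro bexI[of _ w]) auto
qed

lemma tree_restrict_succ_nonempty:
  assumes T: "T \<in> PP M" and s: "s \<in> T" and w: "w \<in> tree_restrict T s"
  shows "succ_tree (tree_restrict T s) w \<noteq> {}"
proof (cases "length s \<le> length w")
  case True
  then show ?thesis
    using PP_succ_nonempty[OF T] w tree_restrict_subset succ_tree_tree_restrict by blast
next
  case False
  define v where "v = take (Suc (length w)) s"
  have "v \<in> tree_restrict T s"
    using PP_take_closed[OF T s, of "Suc (length w)"] False by (simp add: v_def tree_restrict_def)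
  moreover have "take (length w) v = w"
    using tree_restrict_below[OF w] False by (simp add: v_def min_absorb1)
  ultimately have "v \<in> succ_tree (tree_restrict T s) w"
    using False by (simp add: succ_tree_def v_def)
  then show ?thesis by auto
qed

lemma tree_restrict_branching_extension:
  assumes T: "T \<in> PP M" and s: "s \<in> T" and w: "w \<in> tree_restrict T s"
  shows "\<exists>v\<in>tree_restrict T s. length w \<le> length v \<and> take (length w) v = w
           \<and> branching (tree_restrict T s) v"
proof -
  obtain w' where w': "w' \<in> tree_restrict T s" "length s \<le> length w'"
      "length w \<le> length w'" "take (length w) w' = w"
    using tree_restrict_extends_beyond[OF s w] by blast
  obtain v where v: "v \<in> T" "length w' \<le> length v" "take (length w') v = w'" "branching T v"
    using PP_branching_extension[OF T] w'(1) tree_restrict_subset by blast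
  have "v \<in> tree_restrict T s"
    using v(1,3) take_length_trans[OF v(3) w'(2) tree_restrict_above[OF w'(1,2)]]
    by (simp add: tree_restrict_def)
  moreover have "take (length w) v = w"
    using v(3) w'(3,4) by (metis take_length_trans)
  moreover have "branching (tree_restrict T s) v"
    using branching_tree_restrict[OF \<open>v \<in> tree_restrict T s\<close>] v(2,4) w'(2) by simp
  moreover have "length w \<le> length v" using v(2) w'(3) by simp
  ultimately show ?thesis by blast
qed

lemma tree_restrict_low_norm_subset:
  "{w\<in>tree_restrict T s. branching (tree_restrict T s) w \<and> norm_le K (succ_vals (tree_restrict T s) w)}
     \<subseteq> {w\<in>T. branching T w \<and> norm_le K (succ_vals T w)} \<union> (\<lambda>i. take i s) ` {..length s}"
proof
  fix w assume w: "w \<in> {w\<in>tree_restrict T s. branching (tree_restrict T s) w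
                            \<and> norm_le K (succ_vals (tree_restrict T s) w)}"
  show "w \<in> {w\<in>T. branching T w \<and> norm_le K (succ_vals T w)} \<union> (\<lambda>i. take i s) ` {..length s}"
  proof (cases "length s \<le> length w")
    case True
    then show ?thesis using w tree_restrict_subset
        branching_tree_restrict[of w T s] succ_vals_tree_restrict[of w T s] by auto
  next
    case False
    then have "take (length w) s = w" using w tree_restrict_below[of w T s] by auto
    with False show ?thesis by (intro UnI2 image_eqI[of _ _ "length w"]) auto
  qed
qed

lemma tree_restrict_in_PP:
  assumes T: "T \<in> PP M" and s: "s \<in> T"
  shows "tree_restrict T s \<in> PP M"
  unfolding PP_def
proof (intro CollectI conjI ballI allI impI)
  show "tree_restrict T s \<noteq> {}" using tree_restrict_self[OF s] by auto
  show "take k w \<in> tree_restrict T s" if "w \<in> tree_restrict T s" "k \<le> length w" for w k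
    using tree_restrict_take_closed[OF PP_take_closed[OF T]] that by blast
  show "w ! k \<in> CC M k" if "w \<in> tree_restrict T s" "k < length w" for w k
    using PP_CC[OF T] tree_restrict_subset that by blast
  show "succ_tree (tree_restrict T s) w \<noteq> {}" if "w \<in> tree_restrict T s" for w
    using tree_restrict_succ_nonempty[OF T s that] .
  show "\<exists>v\<in>tree_restrict T s. length w \<le> length v \<and> take (length w) v = w
          \<and> branching (tree_restrict T s) v" if "w \<in> tree_restrict T s" for w
    using tree_restrict_branching_extension[OF T s that] .
  show "finite {w\<in>tree_restrict T s. branching (tree_restrict T s) w
                  \<and> norm_le K (succ_vals (tree_restrict T s) w)}" for K
    using finite_subset[OF tree_restrict_low_norm_subset] PP_finite_low_norm[OF T] by blast
qed

lemma branch_through_tree_restrict: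
  assumes "\<And>j. map g [0..<j] \<in> tree_restrict T s"
  shows "map g [0..<length s] = s"
  using tree_restrict_above[OF assms[of "length s"]] by simp

theorem lemma4p8:
  fixes r :: real and M :: "nat \<Rightarrow> nat"
  assumes "0 < r" and "r < real CARD('n)"
    and "\<And>k. M k > 0"
    and "\<And>k. 2 ^ k * (sqrt (real CARD('n)) / real (M k)) powr r < 2 powi (- int k)"
  shows "\<forall>x \<in> (unit_cube :: (real ^ 'n) set). \<forall>m::nat. \<forall>T \<in> PP M.
           \<exists>T' \<in> PP M. T' \<subseteq> T \<and>
             (\<forall>g :: nat \<Rightarrow> (real ^ 'n) set. (\<forall>j. map g [0..<j] \<in> T') \<longrightarrow> (\<exists>k\<ge>m. x \<in> g k))"
proof (intro ballI allI)
  fix x :: "real ^ 'n" and m :: nat and T :: "(real ^ 'n) set list set"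
  assume x: "x \<in> unit_cube" and T: "T \<in> PP M"
  obtain t where t: "t \<in> T" "m \<le> length t" "\<Union> (succ_vals T t) = unit_cube"
    using PP_covering_node_above[OF T] by blast
  from x t(3) obtain v where "v \<in> succ_vals T t" "x \<in> v" by blast
  then obtain s where s: "s \<in> succ_tree T t" "x \<in> s ! length t"
    unfolding succ_vals_def by blast
  then have sT: "s \<in> T" and ts: "length t < length s" by (simp_all add: succ_tree_def)
  have "\<exists>k\<ge>m. x \<in> g k" if "\<forall>j. map g [0..<j] \<in> tree_restrict T s" for g
  proof -
    have "s ! length t = map g [0..<length s] ! length t"
      using branch_through_tree_restrict[of g T s] that by simp
    also have "\<dots> = g (length t)" using ts by simp
    finally show ?thesis using s(2) t(2) by auto
  qed
  then show "\<exists>T'\<in>PP M. T' \<subseteq> T \<and> (\<forall>g. (\<forall>j. map g [0..<j] \<in> T') \<longrightarrow> (\<exists>k\<ge>m. x \<in> g k))"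
    using tree_restrict_in_PP[OF T sT] tree_restrict_subset by blast
qed

end
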